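(* The assignment $r\mapsto\mathfrak g(r)$ is a bijection between the set of normalized formal generalized $r$-matrices $r\in(\mathfrak g\otimes\mathfrak g)(\!(x)\!)[\![y]\!]$ and the set of Lie subalgebras $W\subseteq\mathfrak g(\!(z)\!)$ satisfying $\mathfrak g(\!(z)\!)=\mathfrak g[\![z]\!]\oplus W$ (direct sum of vector spaces).
   Context: $\Bbbk$ is a field of characteristic $0$, $\mathfrak g$ a finite-dimensional semisimple Lie algebra over $\Bbbk$ of dimension $d$ with Killing form $\kappa$, $\{b_i\}_{i=1}^d$ a $\kappa$-orthonormal basis and $\gamma=\sum_i b_i\otimes b_i$. $\frac{1}{x-y}$ denotes $\sum_{k\ge0}x^{-k-1}y^k\in\Bbbk(\!(x)\!)[\![y]\!]$. A series $r\in(\mathfrak g\otimes\mathfrak g)(\!(x)\!)[\![y]\!]$ is in standard form if $r(x,y)=\frac{\lambda(y)}{x-y}\gamma+r_0(x,y)$ with $\lambda\in\Bbbk[\![z]\!]^\times$, $r_0\in(\mathfrak g\otimes\mathfrak g)[\![x,y]\!]$; normalized if $\lambda=1$. Put $\bar r(x,y)=\frac{\lambda(x)}{x-y}\gamma-\tau(r_0(y,x))$ with $\tau$ the $\Bbbk[\![x,y]\!]$-linear extension of $a\otimes b\mapsto b\otimes a$. For $s\in(\mathfrak g\otimes\mathfrak g)(\!(x)\!)[\![y]\!]$ and $ij\in\{12,13,23\}$, $s^{ij}$ is the element of $(U(\mathfrak g)^{\otimes3})\otimes\Bbbk(\!(x_1)\!)(\!(x_2)\!)[\![x_3]\!]$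 obtained by substituting $(x,y)=(x_i,x_j)$ and placing the tensor factors in positions $i,j$. A (normalized) formal generalized $r$-matrix is a series in (normalized) standard form with $[r^{12},r^{13}]+[r^{12},r^{23}]+[r^{13},\bar r^{23}]=0$. For $s=\sum_{k\ge0}\sum_{i=1}^d s_{k,i}(x)\otimes b_iy^k$ (with $s_{k,i}\in\mathfrak g(\!(x)\!)$), $\mathfrak g(s):=\mathrm{span}_\Bbbk\{s_{k,i}(z)\}\subseteq\mathfrak g(\!(z)\!)$. *)

theory Defs
  imports "HOL-Computational_Algebra.Formal_Laurent_Series" "HOL-Library.Function_Algebras"
begin

text \<open>g has the finite basis b_i (i ranging over the finite type 'i); its bracket is
  given by structure constants: [b_i, b_j] = sum_p c i j p b_p.  Elements of g are coordinate
  vectors 'i => 'k; elements of g((z)) = g (x) k((z)) are coordinate vectors 'i => 'k fls.\<close>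

definition lie_br :: "('i::finite \<Rightarrow> 'i \<Rightarrow> 'i \<Rightarrow> 'a::comm_ring_1) \<Rightarrow> ('i \<Rightarrow> 'a) \<Rightarrow> ('i \<Rightarrow> 'a) \<Rightarrow> ('i \<Rightarrow> 'a)" where
  "lie_br c u v = (\<lambda>p. \<Sum>i\<in>UNIV. \<Sum>j\<in>UNIV. u i * v j * c i j p)"

definition is_lie_algebra_sc :: "('i::finite \<Rightarrow> 'i \<Rightarrow> 'i \<Rightarrow> 'k::field) \<Rightarrow> bool" where
  "is_lie_algebra_sc c \<longleftrightarrow>
     (\<forall>i j p. c i j p = - c j i p) \<and>
     (\<forall>i j l p. (\<Sum>m\<in>UNIV. c j l m * c i m p + c l i m * c j m p + c i j m * c l m p) = 0)"

definition vscale :: "'k::field \<Rightarrow> ('i \<Rightarrow> 'k) \<Rightarrow> ('i \<Rightarrow> 'k)" where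
  "vscale a v = (\<lambda>i. a * v i)"

definition lie_ideal_sc :: "('i::finite \<Rightarrow> 'i \<Rightarrow> 'i \<Rightarrow> 'k::field) \<Rightarrow> ('i \<Rightarrow> 'k) set \<Rightarrow> bool" where
  "lie_ideal_sc c I \<longleftrightarrow> module.subspace vscale I \<and> (\<forall>x\<in>I. \<forall>y. lie_br c y x \<in> I)"

fun derived_sc :: "('i::finite \<Rightarrow> 'i \<Rightarrow> 'i \<Rightarrow> 'k::field) \<Rightarrow> ('i \<Rightarrow> 'k) set \<Rightarrow> nat \<Rightarrow> ('i \<Rightarrow> 'k) set" where
  "derived_sc c I 0 = I"
| "derived_sc c I (Suc n) =
     module.span vscale {lie_br c x y | x y. x \<in> derived_sc c I n \<and> y \<in> derived_sc c I n}"

definition semisimple_sc :: "('i::finite \<Rightarrow> 'i \<Rightarrow> 'i \<Rightarrow> 'k::field) \<Rightarrow> bool" where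
  "semisimple_sc c \<longleftrightarrow>
     (\<forall>I. lie_ideal_sc c I \<and> (\<exists>n. derived_sc c I n = {0}) \<longrightarrow> I = {0})"

text \<open>Killing form on basis vectors: kappa(b_i,b_j) = tr(ad b_i o ad b_j)\<close>
definition killing_sc :: "('i::finite \<Rightarrow> 'i \<Rightarrow> 'i \<Rightarrow> 'k::field) \<Rightarrow> 'i \<Rightarrow> 'i \<Rightarrow> 'k" where
  "killing_sc c i j = (\<Sum>l\<in>UNIV. \<Sum>m\<in>UNIV. c j l m * c i m l)"

text \<open>An element of (g (x) g)((x))[[y]] is given by its coordinates r i j in k((x))[[y]]
  (coefficient of b_i (x) b_j); k((x))[[y]] is 'k fls fps (power series in y with Laurent
  series coefficients in x).  k[[x,y]] is 'k fps fps (power series in y, coefficients in k[[x]]).\<close>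

text \<open>1/(x-y) = sum_k x^(-k-1) y^k\<close>
definition cauchy_kernel :: "'k::field fls fps" where
  "cauchy_kernel = Abs_fps (\<lambda>n. fls_X_intpow (- int n - 1))"

text \<open>coordinates of gamma/(x-y)\<close>
definition gamma_kernel :: "'i \<Rightarrow> 'i \<Rightarrow> 'k::field fls fps" where
  "gamma_kernel i j = (if i = j then cauchy_kernel else 0)"

definition embed2 :: "'k::field fps fps \<Rightarrow> 'k fls fps" where
  "embed2 f = Abs_fps (\<lambda>n. fps_to_fls (fps_nth f n))"

definition normalized_standard_form :: "('i \<Rightarrow> 'i \<Rightarrow> 'k::field fls fps) \<Rightarrow> bool" where
  "normalized_standard_form r \<longleftrightarrow>
     (\<exists>r0 :: 'i \<Rightarrow> 'i \<Rightarrow> 'k fps fps. \<forall>i j. r i j = gamma_kernel i j + embed2 (r0 i j))"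

text \<open>the part r_0 in k[[x,y]] of a series in standard form (nonnegative powers of x)\<close>
definition reg_part2 :: "'k::field fls fps \<Rightarrow> 'k fps fps" where
  "reg_part2 s = Abs_fps (\<lambda>n. fls_regpart (fps_nth s n))"

definition swap2 :: "'k::field fps fps \<Rightarrow> 'k fps fps" where
  "swap2 f = Abs_fps (\<lambda>n. Abs_fps (\<lambda>m. f $ m $ n))"

text \<open>bar r (normalized case, lambda = 1): gamma/(x-y) - tau(r_0(y,x))\<close>
definition rbar :: "('i \<Rightarrow> 'i \<Rightarrow> 'k::field fls fps) \<Rightarrow> 'i \<Rightarrow> 'i \<Rightarrow> 'k fls fps" where
  "rbar r i j = gamma_kernel i j - embed2 (swap2 (reg_part2 (r j i)))"

text \<open>k((x1))((x2))[[x3]] is 'k fls fls fps; the substitutions (x,y) := (x_i,x_j)\<close>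

definition fls_lift :: "'k::field fls \<Rightarrow> 'k fls fls" where
  "fls_lift f = Abs_fls (\<lambda>m. fls_const (fls_nth f m))"

definition sub12 :: "'k::field fls fps \<Rightarrow> 'k fls fls fps" where
  "sub12 s = fps_const (fps_to_fls s)"

definition sub13 :: "'k::field fls fps \<Rightarrow> 'k fls fls fps" where
  "sub13 s = Abs_fps (\<lambda>n. fls_const (fps_nth s n))"

definition sub23 :: "'k::field fls fps \<Rightarrow> 'k fls fls fps" where
  "sub23 s = Abs_fps (\<lambda>n. fls_lift (fps_nth s n))"

definition K3 :: "'k::field \<Rightarrow> 'k fls fls fps" where
  "K3 a = fps_const (fls_const (fls_const a))"

text \<open>Coordinates (w.r.t. b_p (x) b_q (x) b_s) of
  [r^12, r^13] + [r^12, r^23] + [r^13, rbar^23]; all three commutators lie in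
  g (x) g (x) g (x) k((x1))((x2))[[x3]] inside U(g)^(x)3 (x) k((x1))((x2))[[x3]].\<close>
definition gcybe_coord ::
  "('i::finite \<Rightarrow> 'i \<Rightarrow> 'i \<Rightarrow> 'k::field) \<Rightarrow> ('i \<Rightarrow> 'i \<Rightarrow> 'k fls fps) \<Rightarrow> 'i \<Rightarrow> 'i \<Rightarrow> 'i \<Rightarrow> 'k fls fls fps" where
  "gcybe_coord c r p q s =
      (\<Sum>i\<in>UNIV. \<Sum>k\<in>UNIV. K3 (c i k p) * sub12 (r i q) * sub13 (r k s))
    + (\<Sum>j\<in>UNIV. \<Sum>k\<in>UNIV. K3 (c j k q) * sub12 (r p j) * sub23 (r k s))
    + (\<Sum>j\<in>UNIV. \<Sum>l\<in>UNIV. K3 (c j l s) * sub13 (r p j) * sub23 (rbar r q l))"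

definition normalized_formal_generalized_r_matrix ::
  "('i::finite \<Rightarrow> 'i \<Rightarrow> 'i \<Rightarrow> 'k::field) \<Rightarrow> ('i \<Rightarrow> 'i \<Rightarrow> 'k fls fps) \<Rightarrow> bool" where
  "normalized_formal_generalized_r_matrix c r \<longleftrightarrow>
     normalized_standard_form r \<and> (\<forall>p q s. gcybe_coord c r p q s = 0)"

definition lscale :: "'k::field \<Rightarrow> ('i \<Rightarrow> 'k fls) \<Rightarrow> ('i \<Rightarrow> 'k fls)" where
  "lscale a v = (\<lambda>i. fls_const a * v i)"

text \<open>g(r) = span_k of the s_{k,i}(z), where s_{k,i} = sum_j (coeff of y^k in r j i) b_j\<close>
definition g_of :: "('i \<Rightarrow> 'i \<Rightarrow> 'k::field fls fps) \<Rightarrow> ('i \<Rightarrow> 'k fls) set" where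
  "g_of r = module.span lscale {(\<lambda>j. fps_nth (r j i) k) | i k. True}"

definition g_power_series :: "('i \<Rightarrow> 'k::field fls) set" where
  "g_power_series = {f. \<forall>j m. m < 0 \<longrightarrow> fls_nth (f j) m = 0}"

definition lie_subalgebra_loop :: "('i::finite \<Rightarrow> 'i \<Rightarrow> 'i \<Rightarrow> 'k::field) \<Rightarrow> ('i \<Rightarrow> 'k fls) set \<Rightarrow> bool" where
  "lie_subalgebra_loop c W \<longleftrightarrow>
     module.subspace lscale W \<and>
     (\<forall>u\<in>W. \<forall>v\<in>W. lie_br (\<lambda>i j p. fls_const (c i j p)) u v \<in> W)"

definition complementary_to_power_series :: "('i \<Rightarrow> 'k::field fls) set \<Rightarrow> bool" where
  "complementary_to_power_series W \<longleftrightarrow>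
     g_power_series \<inter> W = {0} \<and> (\<forall>f. \<exists>u\<in>g_power_series. \<exists>w\<in>W. f = u + w)"

end

theory Submission
  imports Defs
begin

text \<open>For \<open>r = \<gamma>/(x-y) + r\<^sub>0\<close> the generators \<open>s\<^sub>k\<^sub>,\<^sub>i\<close> of \<open>g(r)\<close> have principal part
  \<open>z\<^sup>-\<^sup>k\<^sup>-\<^sup>1 b\<^sub>i\<close>. Hence \<open>g(r)\<close> is a complement of \<open>g[[z]]\<close>, and \<open>r\<close> is recovered from \<open>g(r)\<close>
  as the family of elements of the complement with these principal parts; conversely every
  complement \<open>W\<close> yields such a family and thus a normalized series \<open>r\<close> with \<open>g(r) = W\<close>.
  In the first tensor factor, the coefficient of \<open>x\<^sub>2\<^sup>k x\<^sub>3\<^sup>l\<close> of the generalized classical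
  Yang--Baxter expression is \<open>[s\<^sub>k\<^sub>,\<^sub>q, s\<^sub>l\<^sub>,\<^sub>s]\<close> plus an element of \<open>g(r)\<close>, and its principal
  part cancels because the structure constants are cyclic for a Killing-orthonormal basis.
  As \<open>g(r) \<inter> g[[z]] = 0\<close>, the equation therefore holds iff \<open>g(r)\<close> is closed under the bracket.\<close>

unbundle fps_syntax

subsection \<open>Structure constants\<close>

lemma structure_const_antisym:
  assumes "is_lie_algebra_sc c"
  shows "c i j p = - c j i p"
  using assms unfolding is_lie_algebra_sc_def by blast

lemma structure_const_jacobi:
  fixes c :: "'i::finite \<Rightarrow> 'i \<Rightarrow> 'i \<Rightarrow> 'k::field"
  assumes L: "is_lie_algebra_sc c"
  shows "(\<Sum>p\<in>UNIV. c i j p * c p m l) = (\<Sum>p\<in>UNIV. c j m p * c i p l + c m i p * c j p l)"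
proof -
  have J: "(\<Sum>p\<in>UNIV. c i j p * c m p l + c j m p * c i p l + c m i p * c j p l) = 0"
    using L unfolding is_lie_algebra_sc_def by blast
  have "(\<Sum>p\<in>UNIV. c i j p * c p m l) = - (\<Sum>p\<in>UNIV. c i j p * c m p l)"
    by (subst structure_const_antisym[OF L]) (simp add: sum_negf)
  also have "\<dots> = (\<Sum>p\<in>UNIV. c j m p * c i p l + c m i p * c j p l)"
    using J by (simp add: sum.distrib add_eq_0_iff add.assoc)
  finally show ?thesis .
qed

lemma sum_rotate3:
  "(\<Sum>p\<in>A. \<Sum>l\<in>B. \<Sum>m\<in>C. F p l m) = (\<Sum>l\<in>B. \<Sum>m\<in>C. \<Sum>p\<in>A. F p l m)"
  by (subst sum.swap) (rule sum.cong[OF refl], rule sum.swap)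

lemma sum_swap_inner:
  "(\<Sum>l\<in>A. \<Sum>m\<in>B. \<Sum>p\<in>C. F l m p) = (\<Sum>l\<in>A. \<Sum>p\<in>C. \<Sum>m\<in>B. F l m p)"
  by (rule sum.cong[OF refl], rule sum.swap)

text \<open>Both sides of \<open>\<kappa>([b\<^sub>i,b\<^sub>j],b\<^sub>k) = \<kappa>(b\<^sub>i,[b\<^sub>j,b\<^sub>k])\<close> expand by the Jacobi identity into
  the same two traces \<open>tr(ad b\<^sub>k ad b\<^sub>j ad b\<^sub>i)\<close> and \<open>tr(ad b\<^sub>k ad b\<^sub>i ad b\<^sub>j)\<close>, up to
  reindexing.\<close>

lemma killing_invariant:
  fixes c :: "'i::finite \<Rightarrow> 'i \<Rightarrow> 'i \<Rightarrow> 'k::field"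
  assumes L: "is_lie_algebra_sc c"
  shows "(\<Sum>p\<in>UNIV. c i j p * killing_sc c p k) = (\<Sum>p\<in>UNIV. c j k p * killing_sc c i p)"
proof -
  have as: "\<And>a b d. c a b d = - c b a d" using structure_const_antisym[OF L] by blast
  let ?S1 = "\<Sum>l\<in>UNIV. \<Sum>m\<in>UNIV. \<Sum>p\<in>UNIV. c k l m * c j m p * c i p l"
  let ?S2 = "\<Sum>l\<in>UNIV. \<Sum>m\<in>UNIV. \<Sum>p\<in>UNIV. c k l m * c m i p * c j p l"
  have "(\<Sum>p\<in>UNIV. c i j p * killing_sc c p k)
      = (\<Sum>p\<in>UNIV. \<Sum>l\<in>UNIV. \<Sum>m\<in>UNIV. c k l m * (c i j p * c p m l))"
    unfolding killing_sc_def by (simp add: sum_distrib_left mult_ac)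
  also have "\<dots> = (\<Sum>l\<in>UNIV. \<Sum>m\<in>UNIV. c k l m * (\<Sum>p\<in>UNIV. c i j p * c p m l))"
    by (subst sum_rotate3) (simp add: sum_distrib_left)
  also have "\<dots> = ?S1 + ?S2"
    by (simp only: structure_const_jacobi[OF L])
      (simp add: sum_distrib_left sum.distrib distrib_left mult_ac)
  finally have lhs: "(\<Sum>p\<in>UNIV. c i j p * killing_sc c p k) = ?S1 + ?S2" .
  have "(\<Sum>p\<in>UNIV. c j k p * killing_sc c i p)
      = (\<Sum>p\<in>UNIV. \<Sum>l\<in>UNIV. \<Sum>m\<in>UNIV. c i m l * (c j k p * c p l m))"
    unfolding killing_sc_def by (simp add: sum_distrib_left mult_ac)
  also have "\<dots> = (\<Sum>l\<in>UNIV. \<Sum>m\<in>UNIV. c i m l * (\<Sum>p\<in>UNIV. c j k p * c p l m))"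
    by (subst sum_rotate3) (simp add: sum_distrib_left)
  also have "\<dots> = (\<Sum>l\<in>UNIV. \<Sum>m\<in>UNIV. \<Sum>p\<in>UNIV. c i m l * c k l p * c j p m)
         + (\<Sum>l\<in>UNIV. \<Sum>m\<in>UNIV. \<Sum>p\<in>UNIV. c i m l * c l j p * c k p m)"
    by (simp only: structure_const_jacobi[OF L])
      (simp add: sum_distrib_left sum.distrib distrib_left mult_ac)
  finally have rhs: "(\<Sum>p\<in>UNIV. c j k p * killing_sc c i p)
      = (\<Sum>l\<in>UNIV. \<Sum>m\<in>UNIV. \<Sum>p\<in>UNIV. c i m l * c k l p * c j p m)
      + (\<Sum>l\<in>UNIV. \<Sum>m\<in>UNIV. \<Sum>p\<in>UNIV. c i m l * c l j p * c k p m)" .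
  have e1: "(\<Sum>l\<in>UNIV. \<Sum>m\<in>UNIV. \<Sum>p\<in>UNIV. c i m l * c k l p * c j p m) = ?S1"
    by (subst sum_swap_inner) (simp add: mult_ac)
  have "?S2 = (\<Sum>l\<in>UNIV. \<Sum>m\<in>UNIV. \<Sum>p\<in>UNIV. c k l m * c i m p * c p j l)"
    by (intro sum.cong refl) (metis as mult_minus_left mult_minus_right minus_minus)
  also have "\<dots> = (\<Sum>p\<in>UNIV. \<Sum>m\<in>UNIV. \<Sum>l\<in>UNIV. c k l m * c i m p * c p j l)"
    by (subst sum_swap_inner, subst sum.swap, subst sum_swap_inner) (rule refl)
  finally have e2: "(\<Sum>l\<in>UNIV. \<Sum>m\<in>UNIV. \<Sum>p\<in>UNIV. c i m l * c l j p * c k p m) = ?S2"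
    by (simp add: mult_ac)
  show ?thesis using lhs rhs e1 e2 by simp
qed

lemma structure_const_cyclic:
  fixes c :: "'i::finite \<Rightarrow> 'i \<Rightarrow> 'i \<Rightarrow> 'k::field"
  assumes "is_lie_algebra_sc c"
    and "\<forall>i j. killing_sc c i j = (if i = j then 1 else 0)"
  shows "c i j k = c j k i"
  using killing_invariant[OF assms(1), of i j k] assms(2)
  by (simp add: if_distrib cong: if_cong)

interpretation lsm: module "lscale :: 'k::field \<Rightarrow> ('i \<Rightarrow> 'k fls) \<Rightarrow> ('i \<Rightarrow> 'k fls)"
  by unfold_locales
    (simp_all add: lscale_def fun_eq_iff algebra_simps fls_plus_const[symmetric] mult.assoc[symmetric])

lemma sum_apply: "(sum f A) x = (\<Sum>a\<in>A. f a x)"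
  by (induct A rule: infinite_finite_induct) auto

lemma lie_br_add_left: "lie_br C (u + u') v = lie_br C u v + lie_br C u' v"
  unfolding lie_br_def by (rule ext) (simp add: distrib_right sum.distrib)

lemma lie_br_add_right: "lie_br C u (v + v') = lie_br C u v + lie_br C u v'"
  unfolding lie_br_def by (rule ext) (simp add: distrib_right distrib_left sum.distrib)

lemma lie_br_zero_left [simp]: "lie_br C 0 v = 0"
  unfolding lie_br_def by (rule ext) simp

lemma lie_br_zero_right [simp]: "lie_br C u 0 = 0"
  unfolding lie_br_def by (rule ext) simp

lemma lie_br_lscale_left: "lie_br C (lscale a u) v = lscale a (lie_br C u v)"
  unfolding lie_br_def lscale_def by (rule ext) (simp add: sum_distrib_left mult_ac)

lemma lie_br_lscale_right: "lie_br C u (lscale a v) = lscale a (lie_br C u v)"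
  unfolding lie_br_def lscale_def by (rule ext) (simp add: sum_distrib_left mult_ac)

lemma lie_br_span_closed:
  fixes S :: "('i::finite \<Rightarrow> 'k::field fls) set"
  assumes gen: "\<And>x y. x \<in> S \<Longrightarrow> y \<in> S \<Longrightarrow> lie_br C x y \<in> lsm.span S"
    and u: "u \<in> lsm.span S" and v: "v \<in> lsm.span S"
  shows "lie_br C u v \<in> lsm.span S"
proof -
  have left: "lie_br C u' y \<in> lsm.span S" if "u' \<in> lsm.span S" "y \<in> S" for u' y
    using that(1)
  proof (induct rule: lsm.span_induct_alt)
    case base then show ?case by (metis lie_br_zero_left lsm.span_zero)
  next
    case (step a x z)
    have "lie_br C (lscale a x + z) y = lscale a (lie_br C x y) + lie_br C z y"
      by (simp only: lie_br_add_left lie_br_lscale_left)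
    then show ?case using step gen that(2) by (metis lsm.span_add lsm.span_scale lsm.span_base)
  qed
  show ?thesis using v
  proof (induct rule: lsm.span_induct_alt)
    case base then show ?case by (metis lie_br_zero_right lsm.span_zero)
  next
    case (step a x z)
    have "lie_br C u (lscale a x + z) = lscale a (lie_br C u x) + lie_br C u z"
      by (simp only: lie_br_add_right lie_br_lscale_right)
    then show ?case using step left u by (metis lsm.span_add lsm.span_scale)
  qed
qed

lemma g_power_series_iff: "v \<in> g_power_series \<longleftrightarrow> (\<forall>j m. m < 0 \<longrightarrow> v j $$ m = 0)"
  by (simp add: g_power_series_def)

definition std_form :: "('i \<Rightarrow> 'i \<Rightarrow> 'k::field fls fps) \<Rightarrow> ('i \<Rightarrow> 'i \<Rightarrow> 'k fps fps) \<Rightarrow> bool" where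
  "std_form r r0 \<longleftrightarrow> (\<forall>i j. r i j = gamma_kernel i j + embed2 (r0 i j))"

lemma normalized_standard_form_iff: "normalized_standard_form r \<longleftrightarrow> (\<exists>r0. std_form r r0)"
  unfolding normalized_standard_form_def std_form_def by simp

lemma gamma_kernel_nth:
  "gamma_kernel j i $ k $$ m = (if j = i \<and> m = - int k - 1 then (1::'k::field) else 0)"
  by (simp add: gamma_kernel_def cauchy_kernel_def)

lemma std_form_coeff:
  "std_form r r0 \<Longrightarrow> r j i $ k = (if j = i then fls_X_intpow (- int k - 1) else 0) + fps_to_fls (r0 j i $ k)"
  unfolding std_form_def by (simp add: gamma_kernel_def cauchy_kernel_def embed2_def)

lemma std_form_nth:
  assumes "std_form r r0"
  shows "r j i $ k $$ m = (if j = i \<and> m = - int k - 1 then 1 else 0) + (if m < 0 then 0 else r0 j i $ k $ nat m)"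
  using assms unfolding std_form_def by (simp add: gamma_kernel_nth embed2_def)

lemma std_form_nth_neg:
  assumes "std_form r r0" "m < 0"
  shows "r j i $ k $$ m = (if j = i \<and> m = - int k - 1 then 1 else 0)"
  using std_form_nth[OF assms(1)] assms(2) by simp

lemma std_form_nth_below:
  assumes "std_form r r0" "t < - int k - 1"
  shows "r j i $ k $$ t = 0"
  using std_form_nth_neg[OF assms(1), of t] assms(2) by simp

lemma reg_part2_std_form:
  assumes "std_form r r0"
  shows "reg_part2 (r j i) = r0 j i"
  by (intro fps_ext) (simp add: reg_part2_def std_form_nth[OF assms])

lemma rbar_nth:
  assumes "std_form r r0"
  shows "rbar r q l $ b $$ k
    = (if q = l \<and> k = - int b - 1 then 1 else 0) - (if k < 0 then 0 else r0 l q $ nat k $ b)"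
  by (simp add: rbar_def gamma_kernel_nth reg_part2_std_form[OF assms] swap2_def embed2_def)

subsection \<open>The subspace g(r)\<close>

definition coeff_vec :: "('i \<Rightarrow> 'i \<Rightarrow> 'k::field fls fps) \<Rightarrow> nat \<Rightarrow> 'i \<Rightarrow> ('i \<Rightarrow> 'k fls)" where
  "coeff_vec r k i = (\<lambda>j. r j i $ k)"

lemma g_of_eq_span: "g_of r = lsm.span {coeff_vec r k i | i k. True}"
  unfolding g_of_def coeff_vec_def by simp

lemma coeff_vec_in_g_of: "coeff_vec r k i \<in> g_of r"
  unfolding g_of_eq_span by (rule lsm.span_base) blast

lemma subspace_g_of: "lsm.subspace (g_of r)"
  unfolding g_of_eq_span by simp

definition coeff_comb :: "('i::finite \<Rightarrow> 'i \<Rightarrow> 'k::field fls fps) \<Rightarrow> nat \<Rightarrow> (nat \<Rightarrow> 'i \<Rightarrow> 'k) \<Rightarrow> ('i \<Rightarrow> 'k fls)" where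
  "coeff_comb r N a = (\<Sum>k<N. \<Sum>i\<in>UNIV. lscale (a k i) (coeff_vec r k i))"

lemma coeff_comb_in_g_of: "coeff_comb r N a \<in> g_of r"
  unfolding coeff_comb_def g_of_eq_span
  by (intro lsm.span_sum lsm.span_scale lsm.span_base) blast

lemma coeff_comb_pad:
  assumes "N \<le> M"
  shows "coeff_comb r N a = coeff_comb r M (\<lambda>k i. if k < N then a k i else 0)"
proof -
  have "coeff_comb r M (\<lambda>k i. if k < N then a k i else 0)
      = (\<Sum>k<N. \<Sum>i\<in>UNIV. lscale (if k < N then a k i else 0) (coeff_vec r k i))"
    unfolding coeff_comb_def using assms by (intro sum.mono_neutral_right) auto
  also have "\<dots> = coeff_comb r N a" unfolding coeff_comb_def by (intro sum.cong refl) auto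
  finally show ?thesis by simp
qed

lemma coeff_comb_add: "coeff_comb r N a + coeff_comb r N b = coeff_comb r N (\<lambda>k i. a k i + b k i)"
  unfolding coeff_comb_def by (simp add: sum.distrib[symmetric] lsm.scale_left_distrib)

lemma lscale_coeff_vec_eq_coeff_comb:
  "lscale x (coeff_vec r k0 i0) = coeff_comb r (Suc k0) (\<lambda>k i. if k = k0 \<and> i = i0 then x else 0)"
proof -
  have "coeff_comb r (Suc k0) (\<lambda>k i. if k = k0 \<and> i = i0 then x else 0)
     = (\<Sum>k<Suc k0. if k = k0 then (\<Sum>i\<in>UNIV. if i = i0 then lscale x (coeff_vec r k i) else 0) else 0)"
    unfolding coeff_comb_def
    by (intro sum.cong refl) (simp add: if_distrib[of "\<lambda>x. lscale x _"] cong: if_cong)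
  also have "\<dots> = lscale x (coeff_vec r k0 i0)" by simp
  finally show ?thesis by simp
qed

lemma g_of_elem_eq_coeff_comb:
  assumes "v \<in> g_of r"
  obtains N a where "v = coeff_comb r N a"
proof -
  have "\<exists>N a. v = coeff_comb r N a"
    using assms unfolding g_of_eq_span
  proof (induct rule: lsm.span_induct_alt)
    case base
    show ?case by (rule exI[of _ 0]) (simp add: coeff_comb_def)
  next
    case (step x u w)
    from step(1) obtain k0 i0 where u: "u = coeff_vec r k0 i0" by blast
    from step(2) obtain N a where w: "w = coeff_comb r N a" by blast
    define M where "M = max N (Suc k0)"
    have "lscale x u + w
        = coeff_comb r M (\<lambda>k i. if k < Suc k0 then (if k = k0 \<and> i = i0 then x else 0) else 0)
        + coeff_comb r M (\<lambda>k i. if k < N then a k i else 0)"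
      unfolding u w M_def by (simp add: lscale_coeff_vec_eq_coeff_comb coeff_comb_pad[symmetric])
    then show ?case by (auto simp: coeff_comb_add)
  qed
  then show ?thesis using that by blast
qed

lemma coeff_comb_nth_neg:
  assumes "std_form r r0" "m < 0"
  shows "coeff_comb r N a j $$ m = (if nat (- m - 1) < N then a (nat (- m - 1)) j else 0)"
proof -
  have "coeff_comb r N a j $$ m = (\<Sum>k<N. \<Sum>i\<in>UNIV. a k i * r j i $ k $$ m)"
    unfolding coeff_comb_def by (simp add: sum_apply fls_nth_sum coeff_vec_def lscale_def)
  also have "\<dots> = (\<Sum>k<N. if k = nat (- m - 1) then a k j else 0)"
  proof (intro sum.cong refl)
    fix k
    have e: "(m = - int k - 1) = (k = nat (- m - 1))" using assms(2) by auto
    show "(\<Sum>i\<in>UNIV. a k i * r j i $ k $$ m) = (if k = nat (- m - 1) then a k j else 0)"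
      by (simp add: std_form_nth_neg[OF assms] e if_distrib[of "\<lambda>x. a _ _ * x"] cong: if_cong)
  qed
  also have "\<dots> = (if nat (- m - 1) < N then a (nat (- m - 1)) j else 0)" by simp
  finally show ?thesis .
qed

lemma g_of_inter_power_series:
  fixes r :: "'i::finite \<Rightarrow> 'i \<Rightarrow> 'k::field fls fps"
  assumes r: "std_form r r0" and v: "v \<in> g_of r" "v \<in> g_power_series"
  shows "v = 0"
proof -
  obtain N a where va: "v = coeff_comb r N a"
    using v(1) by (rule g_of_elem_eq_coeff_comb)
  have "a k j = 0" if "k < N" for k j
  proof -
    have "v j $$ (- int k - 1) = 0" using v(2) by (simp add: g_power_series_iff)
    then show ?thesis using coeff_comb_nth_neg[OF r, of "- int k - 1" N a j] that va by simp
  qed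
  then show ?thesis unfolding va coeff_comb_def by simp
qed

lemma power_series_plus_g_of:
  fixes r :: "'i::finite \<Rightarrow> 'i \<Rightarrow> 'k::field fls fps"
  assumes r: "std_form r r0"
  shows "\<exists>u\<in>g_power_series. \<exists>w\<in>g_of r. f = u + w"
proof -
  define N where "N = (\<Sum>j\<in>UNIV. nat (- fls_subdegree (f j)))"
  define a where "a = (\<lambda>k i. f i $$ (- int k - 1))"
  have below: "f j $$ m = 0" if "m < - int N" for j m
  proof -
    have "nat (- fls_subdegree (f j)) \<le> N"
      unfolding N_def by (rule member_le_sum) auto
    then show ?thesis using that by simp
  qed
  have "f - coeff_comb r N a \<in> g_power_series"
    unfolding g_power_series_iff
  proof (intro allI impI)
    fix j m assume m: "(m::int) < 0"
    show "(f - coeff_comb r N a) j $$ m = 0"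
      using below[of m j] m by (simp add: coeff_comb_nth_neg[OF r m] a_def)
  qed
  then show ?thesis using coeff_comb_in_g_of by force
qed

lemma complementary_g_of:
  fixes r :: "'i::finite \<Rightarrow> 'i \<Rightarrow> 'k::field fls fps"
  assumes "std_form r r0"
  shows "complementary_to_power_series (g_of r)"
  unfolding complementary_to_power_series_def
  using g_of_inter_power_series[OF assms] power_series_plus_g_of[OF assms]
    lsm.subspace_0[OF subspace_g_of] by (auto simp: g_power_series_iff)

lemma std_form_g_of_inj:
  fixes r :: "'i::finite \<Rightarrow> 'i \<Rightarrow> 'k::field fls fps"
  assumes r: "std_form r r0" and r': "std_form r' r0'" and eq: "g_of r = g_of r'"
  shows "r = r'"
proof -
  have "coeff_vec r k i = coeff_vec r' k i" for k i
  proof -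
    have "coeff_vec r k i - coeff_vec r' k i \<in> g_of r"
      using coeff_vec_in_g_of[of r k i] coeff_vec_in_g_of[of r' k i] eq
      by (auto intro: lsm.subspace_diff[OF subspace_g_of])
    moreover have "coeff_vec r k i - coeff_vec r' k i \<in> g_power_series"
      by (simp add: g_power_series_iff coeff_vec_def std_form_nth_neg[OF r] std_form_nth_neg[OF r'])
    ultimately show ?thesis using g_of_inter_power_series[OF r] by force
  qed
  then show ?thesis by (intro ext fps_ext) (metis coeff_vec_def)
qed

lemma fls_times_nth_bounded:
  fixes f g :: "'a::comm_ring_1 fls"
  assumes fa: "\<And>t. t < a \<Longrightarrow> f $$ t = 0" and gb: "\<And>t. t < b \<Longrightarrow> g $$ t = 0"
  shows "(f * g) $$ n = (\<Sum>i\<in>{a..n-b}. f $$ i * g $$ (n - i))"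
proof (cases "f = 0 \<or> g = 0")
  case True
  then show ?thesis by auto
next
  case False
  then have da: "a \<le> fls_subdegree f" and db: "b \<le> fls_subdegree g"
    using fls_subdegree_geI fa gb by blast+
  have "(f * g) $$ n = (\<Sum>i\<in>{fls_subdegree f..n - fls_subdegree g}. f $$ i * g $$ (n - i))"
    by (rule fls_times_nth(2))
  also have "\<dots> = (\<Sum>i\<in>{a..n-b}. f $$ i * g $$ (n - i))"
  proof (rule sum.mono_neutral_left)
    show "\<forall>i\<in>{a..n - b} - {fls_subdegree f..n - fls_subdegree g}. f $$ i * g $$ (n - i) = 0"
      by force
  qed (use da db in auto)
  finally show ?thesis .
qed

lemma fls_lift_nth [simp]: "fls_lift f $$ m = fls_const (f $$ m)"
proof -
  obtain N where "\<forall>n<N. f $$ n = 0" by (rule fls_nth_vanishes_belowE)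
  then have "\<forall>n<N. fls_const (f $$ n) = 0" by simp
  then show ?thesis unfolding fls_lift_def by (rule nth_Abs_fls_lower_bound)
qed

lemma K3_times_nth: "(K3 x * F) $ l $$ k = fls_const x * (F $ l $$ k)"
  by (simp add: K3_def)

lemma sub12_times_sub13_nth: "(sub12 A * sub13 B) $ l $$ k = (if k < 0 then 0 else A $ nat k * B $ l)"
  by (simp add: sub12_def sub13_def)

lemma sub12_times_sub23_nth:
  assumes "\<And>t. t < - int l - 1 \<Longrightarrow> B $ l $$ t = 0"
  shows "(sub12 A * sub23 B) $ l $$ k
     = (\<Sum>m\<in>{0..k + int l + 1}. A $ nat m * fls_const (B $ l $$ (k - m)))"
proof -
  have "(sub12 A * sub23 B) $ l = fps_to_fls A * fls_lift (B $ l)"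
    by (simp add: sub12_def sub23_def)
  also have "\<dots> $$ k = (\<Sum>i\<in>{0..k - (- int l - 1)}. fps_to_fls A $$ i * fls_lift (B $ l) $$ (k - i))"
    by (rule fls_times_nth_bounded) (auto simp: assms)
  also have "\<dots> = (\<Sum>m\<in>{0..k + int l + 1}. A $ nat m * fls_const (B $ l $$ (k - m)))"
    by (intro sum.cong) auto
  finally show ?thesis .
qed

lemma sub13_times_sub23_nth:
  "(sub13 A * sub23 B) $ l $$ k = (\<Sum>a=0..l. A $ a * fls_const (B $ (l - a) $$ k))"
  by (simp add: sub13_def sub23_def fps_mult_nth fls_nth_sum)

text \<open>The coefficient of \<open>x\<^sub>2\<^sup>k x\<^sub>3\<^sup>l\<close> of the three summands of \<open>gcybe_coord\<close>, as
  functions of the first tensor index \<open>p\<close>, i.e.\ as elements of \<open>g((x\<^sub>1))\<close>.\<close>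

definition cybe12_13 ::
  "('i::finite \<Rightarrow> 'i \<Rightarrow> 'i \<Rightarrow> 'k::field) \<Rightarrow> ('i \<Rightarrow> 'i \<Rightarrow> 'k fls fps) \<Rightarrow> 'i \<Rightarrow> 'i \<Rightarrow> nat \<Rightarrow> int \<Rightarrow> 'i \<Rightarrow> 'k fls" where
  "cybe12_13 c r q s l k = (\<lambda>p. \<Sum>i\<in>UNIV. \<Sum>i'\<in>UNIV.
      fls_const (c i i' p) * (if k < 0 then 0 else r i q $ nat k * r i' s $ l))"

definition cybe12_23 ::
  "('i::finite \<Rightarrow> 'i \<Rightarrow> 'i \<Rightarrow> 'k::field) \<Rightarrow> ('i \<Rightarrow> 'i \<Rightarrow> 'k fls fps) \<Rightarrow> 'i \<Rightarrow> 'i \<Rightarrow> nat \<Rightarrow> int \<Rightarrow> 'i \<Rightarrow> 'k fls" where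
  "cybe12_23 c r q s l k = (\<lambda>p. \<Sum>j\<in>UNIV. \<Sum>i'\<in>UNIV. fls_const (c j i' q) *
      (\<Sum>m\<in>{0..k + int l + 1}. r p j $ nat m * fls_const (r i' s $ l $$ (k - m))))"

definition cybe13_23 ::
  "('i::finite \<Rightarrow> 'i \<Rightarrow> 'i \<Rightarrow> 'k::field) \<Rightarrow> ('i \<Rightarrow> 'i \<Rightarrow> 'k fls fps) \<Rightarrow> 'i \<Rightarrow> 'i \<Rightarrow> nat \<Rightarrow> int \<Rightarrow> 'i \<Rightarrow> 'k fls" where
  "cybe13_23 c r q s l k = (\<lambda>p. \<Sum>j\<in>UNIV. \<Sum>l'\<in>UNIV. fls_const (c j l' s) *
      (\<Sum>a=0..l. r p j $ a * fls_const (rbar r q l' $ (l - a) $$ k)))"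

lemma gcybe_coord_nth:
  assumes "std_form r r0"
  shows "gcybe_coord c r p q s $ l $$ k
    = cybe12_13 c r q s l k p + cybe12_23 c r q s l k p + cybe13_23 c r q s l k p"
  unfolding gcybe_coord_def cybe12_13_def cybe12_23_def cybe13_23_def
  by (simp add: fps_sum_nth fls_nth_sum mult.assoc K3_times_nth sub12_times_sub13_nth
      sub12_times_sub23_nth[OF std_form_nth_below[OF assms]] sub13_times_sub23_nth)

lemma cybe12_13_eq_lie_br:
  "cybe12_13 c r q s l k
    = (if k < 0 then 0 else lie_br (\<lambda>i j p. fls_const (c i j p)) (coeff_vec r (nat k) q) (coeff_vec r l s))"
  unfolding cybe12_13_def lie_br_def by (rule ext) (simp add: coeff_vec_def mult_ac)

lemma cybe12_23_in_g_of: "cybe12_23 c r q s l k \<in> g_of r"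
proof -
  have "cybe12_23 c r q s l k = (\<Sum>j\<in>UNIV. \<Sum>i'\<in>UNIV. \<Sum>m\<in>{0..k + int l + 1}.
           lscale (c j i' q * r i' s $ l $$ (k - m)) (coeff_vec r (nat m) j))"
    unfolding cybe12_23_def
    by (rule ext) (simp add: sum_apply lscale_def coeff_vec_def sum_distrib_left
        fls_const_mult_const[symmetric] mult_ac del: fls_const_mult_const)
  also have "\<dots> \<in> g_of r"
    by (intro lsm.subspace_sum[OF subspace_g_of] lsm.subspace_scale[OF subspace_g_of] coeff_vec_in_g_of)
  finally show ?thesis .
qed

lemma cybe13_23_in_g_of: "cybe13_23 c r q s l k \<in> g_of r"
proof -
  have "cybe13_23 c r q s l k = (\<Sum>j\<in>UNIV. \<Sum>l'\<in>UNIV. \<Sum>a=0..l.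
           lscale (c j l' s * rbar r q l' $ (l - a) $$ k) (coeff_vec r a j))"
    unfolding cybe13_23_def
    by (rule ext) (simp add: sum_apply lscale_def coeff_vec_def sum_distrib_left
        fls_const_mult_const[symmetric] mult_ac del: fls_const_mult_const)
  also have "\<dots> \<in> g_of r"
    by (intro lsm.subspace_sum[OF subspace_g_of] lsm.subspace_scale[OF subspace_g_of] coeff_vec_in_g_of)
  finally show ?thesis .
qed

subsection \<open>Principal parts\<close>

lemma sum_std_form_nth_neg_int:
  assumes "std_form r r0" "n < 0"
  shows "(\<Sum>m\<in>{0..K}. r p j $ nat m $$ n * Y m) = (if p = j \<and> - n - 1 \<le> K then Y (- n - 1) else 0)"
proof -
  have "(\<Sum>m\<in>{0..K}. r p j $ nat m $$ n * Y m)
      = (\<Sum>m\<in>{0..K}. if m = - n - 1 then (if p = j then Y m else 0) else 0)"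
  proof (intro sum.cong refl)
    fix m assume "m \<in> {0..K}"
    then have "(n = - int (nat m) - 1) = (m = - n - 1)" by auto
    then show "r p j $ nat m $$ n * Y m = (if m = - n - 1 then (if p = j then Y m else 0) else 0)"
      by (simp add: std_form_nth_neg[OF assms])
  qed
  also have "\<dots> = (if p = j \<and> - n - 1 \<le> K then Y (- n - 1) else 0)"
    using assms(2) by simp
  finally show ?thesis .
qed

lemma sum_std_form_nth_neg_nat:
  assumes "std_form r r0" "n < 0"
  shows "(\<Sum>a=0..l. r p j $ a $$ n * Z a) = (if p = j \<and> nat (- n - 1) \<le> l then Z (nat (- n - 1)) else 0)"
proof -
  have "(\<Sum>a=0..l. r p j $ a $$ n * Z a)
      = (\<Sum>a=0..l. if a = nat (- n - 1) then (if p = j then Z a else 0) else 0)"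
  proof (intro sum.cong refl)
    fix a
    have "(n = - int a - 1) = (a = nat (- n - 1))" using assms(2) by auto
    then show "r p j $ a $$ n * Z a = (if a = nat (- n - 1) then (if p = j then Z a else 0) else 0)"
      by (simp add: std_form_nth_neg[OF assms])
  qed
  also have "\<dots> = (if p = j \<and> nat (- n - 1) \<le> l then Z (nat (- n - 1)) else 0)"
    by simp
  finally show ?thesis .
qed

lemma sum_sum_if_eq:
  "(\<Sum>j\<in>(UNIV::'i::finite set). \<Sum>k\<in>A. if p = j \<and> P then f j k else 0) = (\<Sum>k\<in>A. if P then f p k else 0)"
proof -
  have "(\<Sum>j\<in>(UNIV::'i set). \<Sum>k\<in>A. if p = j \<and> P then f j k else 0)
     = (\<Sum>j\<in>(UNIV::'i set). if p = j then (\<Sum>k\<in>A. if P then f j k else 0) else 0)"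
    by (intro sum.cong refl) auto
  also have "\<dots> = (\<Sum>k\<in>A. if P then f p k else 0)" by simp
  finally show ?thesis .
qed

lemma fls_shift_one_times:
  fixes f :: "'a::semiring_1 fls"
  shows "fls_shift a 1 * f = fls_shift a f" "f * fls_shift a 1 = fls_shift a f"
  using fls_X_intpow_times_conv_shift[where i="-a" and f=f] by simp_all

lemma std_form_times_nth_neg:
  assumes r: "std_form r r0" and n: "n < 0"
  shows "(r i q $ k * r i' s $ l) $$ n = (if i = q then r i' s $ l $$ (n + int k + 1) else 0)
      + (if i' = s then (if 0 \<le> n + int l + 1 then r0 i q $ k $ nat (n + int l + 1) else 0) else 0)"
proof -
  define Y where "Y = r i' s $ l"
  have "(r i q $ k * Y) $$ n = ((if i = q then fls_X_intpow (- int k - 1) else 0) * Y) $$ n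
       + (fps_to_fls (r0 i q $ k) * (if i' = s then fls_X_intpow (- int l - 1) else 0)) $$ n
       + (fps_to_fls (r0 i q $ k) * fps_to_fls (r0 i' s $ l)) $$ n"
    by (simp add: std_form_coeff[OF r] Y_def distrib_left distrib_right)
  also have "(fps_to_fls (r0 i q $ k) * fps_to_fls (r0 i' s $ l)) $$ n = 0"
    using n by (simp add: fls_times_fps_to_fls[symmetric])
  finally show ?thesis
    by (simp add: Y_def fls_shift_one_times algebra_simps)
qed

lemma cybe12_13_principal:
  assumes r: "std_form r r0" and n: "n < 0"
  shows "cybe12_13 c r q s l (int k) p $$ n = (\<Sum>i'\<in>UNIV. c q i' p * r i' s $ l $$ (n + int k + 1))
     + (\<Sum>i\<in>UNIV. c i s p * (if 0 \<le> n + int l + 1 then r0 i q $ k $ nat (n + int l + 1) else 0))"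
proof -
  have "cybe12_13 c r q s l (int k) p $$ n
      = (\<Sum>i\<in>UNIV. \<Sum>i'\<in>UNIV. if i = q then c i i' p * r i' s $ l $$ (n + int k + 1) else 0)
      + (\<Sum>i\<in>UNIV. \<Sum>i'\<in>UNIV. if i' = s then c i i' p *
           (if 0 \<le> n + int l + 1 then r0 i q $ k $ nat (n + int l + 1) else 0) else 0)"
    unfolding cybe12_13_def
    by (simp add: fls_nth_sum std_form_times_nth_neg[OF r n] distrib_left sum.distrib
        if_distrib[of "\<lambda>x. _ * x"] cong: if_cong)
  then show ?thesis
    by (simp add: sum.swap[of "\<lambda>i i'. if i = q then _ i i' else 0"])
qed

lemma cybe12_23_principal:
  assumes r: "std_form r r0" and n: "n < 0"
  shows "cybe12_23 c r q s l k p $$ n = (\<Sum>i'\<in>UNIV. c p i' q * r i' s $ l $$ (k + n + 1))"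
proof -
  have "cybe12_23 c r q s l k p $$ n = (\<Sum>j\<in>UNIV. \<Sum>i'\<in>UNIV. c j i' q *
      (\<Sum>m\<in>{0..k + int l + 1}. r p j $ nat m $$ n * (r i' s $ l $$ (k - m))))"
    unfolding cybe12_23_def by (simp add: fls_nth_sum)
  also have "\<dots> = (\<Sum>k'\<in>UNIV. c p k' q *
      (if - n - 1 \<le> k + int l + 1 then r k' s $ l $$ (k + n + 1) else 0))"
    by (simp add: sum_std_form_nth_neg_int[OF r n] algebra_simps if_distrib[of "\<lambda>x. _ * x"]
        sum_sum_if_eq cong: if_cong)
  also have "\<dots> = (\<Sum>i'\<in>UNIV. c p i' q * r i' s $ l $$ (k + n + 1))"
    using std_form_nth_below[OF r] by (intro sum.cong refl) auto
  finally show ?thesis .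
qed

lemma cybe13_23_principal:
  assumes r: "std_form r r0" and n: "n < 0"
  shows "cybe13_23 c r q s l k p $$ n = (if nat (- n - 1) \<le> l
     then (\<Sum>l'\<in>UNIV. c p l' s * rbar r q l' $ (l - nat (- n - 1)) $$ k) else 0)"
proof -
  have "cybe13_23 c r q s l k p $$ n = (\<Sum>j\<in>UNIV. \<Sum>l'\<in>UNIV. c j l' s *
      (\<Sum>a=0..l. r p j $ a $$ n * rbar r q l' $ (l - a) $$ k))"
    unfolding cybe13_23_def by (simp add: fls_nth_sum)
  then show ?thesis
    by (simp add: sum_std_form_nth_neg_nat[OF r n] if_distrib[of "\<lambda>x. _ * x"] sum_sum_if_eq
        cong: if_cong)
qed

lemma gcybe_coeff_principal_zero_neg:
  fixes c :: "'i::finite \<Rightarrow> 'i \<Rightarrow> 'i \<Rightarrow> 'k::field"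
  assumes L: "is_lie_algebra_sc c" and K: "\<forall>i j. killing_sc c i j = (if i = j then 1 else 0)"
    and r: "std_form r r0" and n: "n < 0" and k: "k < 0"
  shows "(cybe12_13 c r q s l k p + cybe12_23 c r q s l k p + cybe13_23 c r q s l k p) $$ n = 0"
proof -
  have "cybe12_13 c r q s l k p $$ n = 0" using k by (simp add: cybe12_13_def)
  moreover have "cybe12_23 c r q s l k p $$ n = (if k + n + 1 = - int l - 1 then c p s q else 0)"
    using k n by (simp add: cybe12_23_principal[OF r n] std_form_nth_neg[OF r]
        if_distrib[of "\<lambda>x. _ * x"] cong: if_cong)
  moreover have "cybe13_23 c r q s l k p $$ n = (if k + n + 1 = - int l - 1 then c p q s else 0)"
  proof -
    have "cybe13_23 c r q s l k p $$ n
        = (if nat (- n - 1) \<le> l \<and> k = - int (l - nat (- n - 1)) - 1 then c p q s else 0)"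
      using k by (simp add: cybe13_23_principal[OF r n] rbar_nth[OF r]
          if_distrib[of "\<lambda>x. _ * x"] cong: if_cong)
    also have "(nat (- n - 1) \<le> l \<and> k = - int (l - nat (- n - 1)) - 1) = (k + n + 1 = - int l - 1)"
      using k n by auto
    finally show ?thesis .
  qed
  moreover have "c p s q + c p q s = 0"
    using structure_const_antisym[OF L, of p s q] structure_const_cyclic[OF L K, of s p q] by simp
  ultimately show ?thesis by simp
qed

lemma gcybe_coeff_principal_zero_nonneg:
  fixes c :: "'i::finite \<Rightarrow> 'i \<Rightarrow> 'i \<Rightarrow> 'k::field"
  assumes L: "is_lie_algebra_sc c" and K: "\<forall>i j. killing_sc c i j = (if i = j then 1 else 0)"
    and r: "std_form r r0" and n: "n < 0"
  shows "(cybe12_13 c r q s l (int k) p + cybe12_23 c r q s l (int k) p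
    + cybe13_23 c r q s l (int k) p) $$ n = 0"
proof -
  have as: "\<And>a b d. c a b d = - c b a d" using structure_const_antisym[OF L] by blast
  have cyc: "\<And>a b d. c a b d = c b d a" using structure_const_cyclic[OF L K] by blast
  define G where "G = (\<lambda>i. if 0 \<le> n + int l + 1 then r0 i q $ k $ nat (n + int l + 1) else 0)"
  define R where "R = (\<lambda>i'. r i' s $ l $$ (n + int k + 1))"
  have "cybe12_13 c r q s l (int k) p $$ n = (\<Sum>i'\<in>UNIV. c q i' p * R i') + (\<Sum>i\<in>UNIV. c i s p * G i)"
    unfolding R_def G_def by (rule cybe12_13_principal[OF r n])
  moreover have "cybe12_23 c r q s l (int k) p $$ n = - (\<Sum>i'\<in>UNIV. c q i' p * R i')"
    unfolding cybe12_23_principal[OF r n] R_def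
    by (simp add: sum_negf cyc[of q _ p] as[of _ p q] add.commute add.left_commute)
  moreover have "cybe13_23 c r q s l (int k) p $$ n = - (\<Sum>i\<in>UNIV. c i s p * G i)"
  proof (cases "0 \<le> n + int l + 1")
    case True
    then have "nat (- n - 1) \<le> l" and "l - nat (- n - 1) = nat (n + int l + 1)" using n by auto
    then show ?thesis
      using True by (simp add: cybe13_23_principal[OF r n] rbar_nth[OF r] G_def sum_negf
          cyc[of _ s p] cyc[of s p])
  next
    case False
    then show ?thesis using n by (simp add: cybe13_23_principal[OF r n] G_def)
  qed
  ultimately show ?thesis by simp
qed

lemma gcybe_coeff_principal_zero:
  fixes c :: "'i::finite \<Rightarrow> 'i \<Rightarrow> 'i \<Rightarrow> 'k::field"
  assumes "is_lie_algebra_sc c" "\<forall>i j. killing_sc c i j = (if i = j then 1 else 0)"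
    and "std_form r r0" "n < 0"
  shows "(cybe12_13 c r q s l k p + cybe12_23 c r q s l k p + cybe13_23 c r q s l k p) $$ n = 0"
proof (cases "k < 0")
  case True
  then show ?thesis by (rule gcybe_coeff_principal_zero_neg[OF assms])
next
  case False
  then obtain k0 where "k = int k0" by (metis nonneg_eq_int not_less)
  then show ?thesis using gcybe_coeff_principal_zero_nonneg[OF assms] by simp
qed

subsection \<open>The equation as closure under the bracket\<close>

lemma gcybe_coeff_vec:
  assumes "std_form r r0"
  shows "(\<lambda>p. gcybe_coord c r p q s $ l $$ k)
    = cybe12_13 c r q s l k + cybe12_23 c r q s l k + cybe13_23 c r q s l k"
  by (rule ext) (simp add: gcybe_coord_nth[OF assms])

lemma gcybe_zero_iff_lie_subalgebra:
  fixes c :: "'i::finite \<Rightarrow> 'i \<Rightarrow> 'i \<Rightarrow> 'k::field"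
  assumes L: "is_lie_algebra_sc c" and K: "\<forall>i j. killing_sc c i j = (if i = j then 1 else 0)"
    and r: "std_form r r0"
  shows "(\<forall>p q s. gcybe_coord c r p q s = 0) \<longleftrightarrow> lie_subalgebra_loop c (g_of r)"
proof
  assume G: "\<forall>p q s. gcybe_coord c r p q s = 0"
  have bracket: "lie_br (\<lambda>i j p. fls_const (c i j p)) (coeff_vec r k q) (coeff_vec r l s) \<in> g_of r"
    for k q l s
  proof -
    have "(\<lambda>p. gcybe_coord c r p q s $ l $$ int k) = 0"
      using G by (intro ext) simp
    then have "cybe12_13 c r q s l (int k) = - (cybe12_23 c r q s l (int k) + cybe13_23 c r q s l (int k))"
      unfolding eq_neg_iff_add_eq_0 by (simp only: gcybe_coeff_vec[OF r] add.assoc)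
    also have "\<dots> \<in> g_of r"
      by (intro lsm.subspace_neg lsm.subspace_add subspace_g_of cybe12_23_in_g_of cybe13_23_in_g_of)
    finally show ?thesis by (simp add: cybe12_13_eq_lie_br)
  qed
  show "lie_subalgebra_loop c (g_of r)"
    unfolding lie_subalgebra_loop_def
  proof (intro conjI ballI subspace_g_of)
    fix u v assume "u \<in> g_of r" "v \<in> g_of r"
    then show "lie_br (\<lambda>i j p. fls_const (c i j p)) u v \<in> g_of r"
      unfolding g_of_eq_span
    proof (rule lie_br_span_closed[rotated])
      fix x y assume "x \<in> {coeff_vec r k i |i k. True}" "y \<in> {coeff_vec r k i |i k. True}"
      then show "lie_br (\<lambda>i j p. fls_const (c i j p)) x y \<in> lsm.span {coeff_vec r k i |i k. True}"
        using bracket unfolding g_of_eq_span by blast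
    qed
  qed
next
  assume W: "lie_subalgebra_loop c (g_of r)"
  have coeff0: "(\<lambda>p. gcybe_coord c r p q s $ l $$ k) = 0" for q s l k
  proof -
    have "lie_br (\<lambda>i j p. fls_const (c i j p)) (coeff_vec r (nat k) q) (coeff_vec r l s) \<in> g_of r"
      using W coeff_vec_in_g_of[of r "nat k" q] coeff_vec_in_g_of[of r l s]
      unfolding lie_subalgebra_loop_def by blast
    then have "cybe12_13 c r q s l k \<in> g_of r"
      using lsm.subspace_0[OF subspace_g_of[of r]] by (simp add: cybe12_13_eq_lie_br)
    then have "(\<lambda>p. gcybe_coord c r p q s $ l $$ k) \<in> g_of r"
      unfolding gcybe_coeff_vec[OF r]
      by (intro lsm.subspace_add subspace_g_of cybe12_23_in_g_of cybe13_23_in_g_of)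
    moreover have "(\<lambda>p. gcybe_coord c r p q s $ l $$ k) \<in> g_power_series"
      using gcybe_coeff_principal_zero[OF L K r] by (simp add: g_power_series_iff gcybe_coeff_vec[OF r])
    ultimately show ?thesis by (rule g_of_inter_power_series[OF r])
  qed
  show "\<forall>p q s. gcybe_coord c r p q s = 0"
    using coeff0 by (intro allI fps_ext fls_eqI) (simp add: fun_eq_iff)
qed

subsection \<open>The inverse map\<close>

definition principal_vec :: "nat \<Rightarrow> 'i \<Rightarrow> ('i \<Rightarrow> 'k::field fls)" where
  "principal_vec k i = (\<lambda>j. if j = i then fls_X_intpow (- int k - 1) else 0)"

text \<open>The element of a complement \<open>W\<close> of \<open>g[[z]]\<close> with principal part \<open>z\<^sup>-\<^sup>k\<^sup>-\<^sup>1 b\<^sub>i\<close>.\<close>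

definition complement_vec :: "('i \<Rightarrow> 'k::field fls) set \<Rightarrow> nat \<Rightarrow> 'i \<Rightarrow> ('i \<Rightarrow> 'k fls)" where
  "complement_vec W k i = (SOME w. w \<in> W \<and> principal_vec k i - w \<in> g_power_series)"

definition rmatrix_of :: "('i \<Rightarrow> 'k::field fls) set \<Rightarrow> 'i \<Rightarrow> 'i \<Rightarrow> 'k fls fps" where
  "rmatrix_of W = (\<lambda>j i. Abs_fps (\<lambda>k. complement_vec W k i j))"

lemma complement_vec:
  assumes "complementary_to_power_series W"
  shows "complement_vec W k i \<in> W" "principal_vec k i - complement_vec W k i \<in> g_power_series"
proof -
  obtain u w where "u \<in> g_power_series" "w \<in> W" "principal_vec k i = u + w"
    using assms unfolding complementary_to_power_series_def by blast
  then have "\<exists>w. w \<in> W \<and> principal_vec k i - w \<in> g_power_series" by (intro exI[of _ w]) simp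
  then have "complement_vec W k i \<in> W \<and> principal_vec k i - complement_vec W k i \<in> g_power_series"
    unfolding complement_vec_def by (rule someI_ex)
  then show "complement_vec W k i \<in> W" "principal_vec k i - complement_vec W k i \<in> g_power_series"
    by simp_all
qed

lemma coeff_vec_rmatrix_of: "coeff_vec (rmatrix_of W) k i = complement_vec W k i"
  by (rule ext) (simp add: coeff_vec_def rmatrix_of_def)

lemma std_form_rmatrix_of:
  assumes C: "complementary_to_power_series W"
  shows "std_form (rmatrix_of W) (\<lambda>j i. Abs_fps (\<lambda>k. fls_regpart (complement_vec W k i j)))"
  unfolding std_form_def
proof (intro allI fps_ext fls_eqI)
  fix j i k m
  have "m < 0 \<Longrightarrow> complement_vec W k i j $$ m = principal_vec k i j $$ m"
    using complement_vec(2)[OF C, of k i] by (simp add: g_power_series_iff)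
  then show "rmatrix_of W j i $ k $$ m = (gamma_kernel j i + embed2 (Abs_fps (\<lambda>k. fls_regpart (complement_vec W k i j)))) $ k $$ m"
    by (cases "m < 0") (simp_all add: rmatrix_of_def gamma_kernel_nth principal_vec_def embed2_def)
qed

lemma g_of_rmatrix_of:
  fixes W :: "('i::finite \<Rightarrow> 'k::field fls) set"
  assumes C: "complementary_to_power_series W" and W: "lsm.subspace W"
  shows "g_of (rmatrix_of W) = W"
proof
  show sub: "g_of (rmatrix_of W) \<subseteq> W"
    unfolding g_of_eq_span
    by (rule lsm.span_minimal[OF _ W]) (auto simp: coeff_vec_rmatrix_of complement_vec(1)[OF C])
  show "W \<subseteq> g_of (rmatrix_of W)"
  proof
    fix v assume v: "v \<in> W"
    obtain u w where u: "u \<in> g_power_series" and w: "w \<in> g_of (rmatrix_of W)" and vw: "v = u + w"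
      using power_series_plus_g_of[OF std_form_rmatrix_of[OF C], of v] by blast
    have "u = v - w" using vw by simp
    then have "u \<in> W" using v w sub lsm.subspace_diff[OF W] by blast
    then have "u = 0" using u C unfolding complementary_to_power_series_def by blast
    then show "v \<in> g_of (rmatrix_of W)" using vw w by simp
  qed
qed

theorem proposition1p9:
  fixes c :: "'i::finite \<Rightarrow> 'i \<Rightarrow> 'i \<Rightarrow> 'k::field_char_0"
  assumes "is_lie_algebra_sc c"
    and "semisimple_sc c"
    and "\<forall>i j. killing_sc c i j = (if i = j then 1 else 0)"
  shows "bij_betw (g_of :: ('i \<Rightarrow> 'i \<Rightarrow> 'k fls fps) \<Rightarrow> _)
           {r. normalized_formal_generalized_r_matrix c r}
           {W. lie_subalgebra_loop c W \<and> complementary_to_power_series W}"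
proof -
  have rmat_iff: "normalized_formal_generalized_r_matrix c r
      \<longleftrightarrow> (\<exists>r0. std_form r r0) \<and> lie_subalgebra_loop c (g_of r)" for r :: "'i \<Rightarrow> 'i \<Rightarrow> 'k fls fps"
    unfolding normalized_formal_generalized_r_matrix_def normalized_standard_form_iff
    using gcybe_zero_iff_lie_subalgebra[OF assms(1,3)] by blast
  show ?thesis
  proof (rule bij_betw_imageI)
    show "inj_on g_of {r. normalized_formal_generalized_r_matrix c r}"
    proof (rule inj_onI)
      fix r r' assume "r \<in> {r. normalized_formal_generalized_r_matrix c r}"
        "r' \<in> {r. normalized_formal_generalized_r_matrix c r}" "g_of r = g_of r'"
      then show "r = r'" unfolding rmat_iff mem_Collect_eq by (metis std_form_g_of_inj)
    qed
    show "g_of ` {r. normalized_formal_generalized_r_matrix c r}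
        = {W. lie_subalgebra_loop c W \<and> complementary_to_power_series W}"
    proof (intro equalityI subsetI)
      fix W assume "W \<in> g_of ` {r. normalized_formal_generalized_r_matrix c r}"
      then obtain r r0 where "W = g_of r" "std_form r r0" "lie_subalgebra_loop c W"
        unfolding rmat_iff by blast
      then show "W \<in> {W. lie_subalgebra_loop c W \<and> complementary_to_power_series W}"
        using complementary_g_of by blast
    next
      fix W assume "W \<in> {W. lie_subalgebra_loop c W \<and> complementary_to_power_series W}"
      then have W: "lie_subalgebra_loop c W" and C: "complementary_to_power_series W" by auto
      then have "g_of (rmatrix_of W) = W"
        by (intro g_of_rmatrix_of) (auto simp: lie_subalgebra_loop_def)
      moreover have "normalized_formal_generalized_r_matrix c (rmatrix_of W)"
        unfolding rmat_iff using std_form_rmatrix_of[OF C] W \<open>g_of (rmatrix_of W) = W\<close> by auto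
      ultimately show "W \<in> g_of ` {r. normalized_formal_generalized_r_matrix c r}" by force
    qed
  qed
qed

end
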